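(* Let $p$ be an odd prime, $n$ a positive integer with $\gcd(n,p)=1$, and let $S$ be a totally isotropic simultaneously negacyclic subspace of $\mathbb{F}_p^n\times\mathbb{F}_p^n$. Then the stabilizer code $\mathcal{C}(S)$ is linear if and only if the image of $S$ under $(\mathbf{a},\mathbf{b})\mapsto\mathbf{a}+\eta\mathbf{b}$ is an ideal of $\mathcal{R}(\eta)=\mathbb{F}_p(\eta)[X]/\langle X^n+1\rangle$. Moreover, if $\mathcal{C}(S)$ is linear, then the image of the symplectic dual $S^{\perp}$ is also an ideal of $\mathcal{R}(\eta)$.
   Context: Let $N:\mathbb{F}_p^n\to\mathbb{F}_p^n$ be $(u_0,\dots,u_{n-1})\mapsto(-u_{n-1},u_0,\dots,u_{n-2})$; $S$ is simultaneously negacyclic if $(\mathbf{a},\mathbf{b})\in S$ implies $(N\mathbf{a},N\mathbf{b})\in S$. The symplectic inner product is $\langle(\mathbf{a},\mathbf{b}),(\mathbf{c},\mathbf{d})\rangle_s=\mathbf{a}^T\mathbf{d}-\mathbf{b}^T\mathbf{c}$; $S$ is totally isotropic if it vanishes on $S\times S$; $S^\perp$ is the symplectic dual. $\mathcal{C}(S)$ denotes the quantum stabilizer code (in $(\mathbb{C}^p)^{\otimes n}$) associated to $S$. Let $\eta$ be a root of an irreducible quadratic polynomial over $\mathbb{F}_p$, so $\mathbb{F}_{p^2}=\mathbb{F}_p(\eta)$; the map $(\mathbf{a},\mathbf{b})\mapsto\mathbf{a}+\eta\mathbf{b}$ identifies $\mathbb{F}_p^n\times\mathbb{F}_p^n$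 with $\mathbb{F}_{p^2}^n$, and (via vector-to-polynomial identification $(a_0,\dots,a_{n-1})\mapsto\sum a_iX^i$) with $\mathcal{R}(\eta)$. The code $\mathcal{C}(S)$ is called linear if the image of $S$ in $\mathbb{F}_{p^2}^n$ is an $\mathbb{F}_{p^2}$-subspace. *)

theory Defs
  imports "HOL-Computational_Algebra.Polynomial" "HOL-Library.Cardinality"
begin

text \<open>The field F_p(eta) = F_{p^2} is a finite field type 'k with
  CARD('k) = p^2; F_p is its prime subfield (the image of the naturals).
  Vectors of length n are functions nat => 'k vanishing from index n on.\<close>

definition Fp :: "'k::field set" where
  "Fp = range (of_nat :: nat \<Rightarrow> 'k)"

definition vecs :: "nat \<Rightarrow> 'k::field set \<Rightarrow> (nat \<Rightarrow> 'k) set" where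
  "vecs n A = {v. (\<forall>i. v i \<in> A) \<and> (\<forall>i\<ge>n. v i = 0)}"

definition root_of_irred_quadratic :: "'k::field \<Rightarrow> bool" where
  "root_of_irred_quadratic eta \<longleftrightarrow>
     (\<exists>c0\<in>Fp. \<exists>c1\<in>Fp. eta^2 + c1 * eta + c0 = 0 \<and> (\<forall>x\<in>Fp. x^2 + c1 * x + c0 \<noteq> 0))"

definition Fp_subspace :: "nat \<Rightarrow> ((nat \<Rightarrow> 'k::field) \<times> (nat \<Rightarrow> 'k)) set \<Rightarrow> bool" where
  "Fp_subspace n S \<longleftrightarrow> S \<subseteq> vecs n Fp \<times> vecs n Fp \<and> (\<lambda>i. 0, \<lambda>i. 0) \<in> S \<and>
     (\<forall>x\<in>S. \<forall>y\<in>S. (\<lambda>i. fst x i + fst y i, \<lambda>i. snd x i + snd y i) \<in> S) \<and>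
     (\<forall>c\<in>Fp. \<forall>x\<in>S. (\<lambda>i. c * fst x i, \<lambda>i. c * snd x i) \<in> S)"

definition negashift :: "nat \<Rightarrow> (nat \<Rightarrow> 'k::ring_1) \<Rightarrow> nat \<Rightarrow> 'k" where
  "negashift n u i = (if i = 0 then - u (n - 1) else if i < n then u (i - 1) else 0)"

definition simul_negacyclic :: "nat \<Rightarrow> ((nat \<Rightarrow> 'k::ring_1) \<times> (nat \<Rightarrow> 'k)) set \<Rightarrow> bool" where
  "simul_negacyclic n S \<longleftrightarrow> (\<forall>(a, b)\<in>S. (negashift n a, negashift n b) \<in> S)"

definition symp :: "nat \<Rightarrow> (nat \<Rightarrow> 'k::comm_ring_1) \<times> (nat \<Rightarrow> 'k) \<Rightarrow> (nat \<Rightarrow> 'k) \<times> (nat \<Rightarrow> 'k) \<Rightarrow> 'k" where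
  "symp n x y = (\<Sum>i<n. fst x i * snd y i) - (\<Sum>i<n. snd x i * fst y i)"

definition totally_isotropic :: "nat \<Rightarrow> ((nat \<Rightarrow> 'k::comm_ring_1) \<times> (nat \<Rightarrow> 'k)) set \<Rightarrow> bool" where
  "totally_isotropic n S \<longleftrightarrow> (\<forall>x\<in>S. \<forall>y\<in>S. symp n x y = 0)"

definition symp_dual :: "nat \<Rightarrow> ((nat \<Rightarrow> 'k::field) \<times> (nat \<Rightarrow> 'k)) set \<Rightarrow> ((nat \<Rightarrow> 'k) \<times> (nat \<Rightarrow> 'k)) set" where
  "symp_dual n S = {y \<in> vecs n Fp \<times> vecs n Fp. \<forall>x\<in>S. symp n x y = 0}"

definition to_Fp2 :: "'k::field \<Rightarrow> (nat \<Rightarrow> 'k) \<times> (nat \<Rightarrow> 'k) \<Rightarrow> nat \<Rightarrow> 'k" where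
  "to_Fp2 eta x = (\<lambda>i. fst x i + eta * snd x i)"

text \<open>C(S) is linear iff the image of S in F_{p^2}^n is an F_{p^2}-subspace.\<close>
definition code_linear :: "nat \<Rightarrow> 'k::field \<Rightarrow> ((nat \<Rightarrow> 'k) \<times> (nat \<Rightarrow> 'k)) set \<Rightarrow> bool" where
  "code_linear n eta S \<longleftrightarrow> (let V = to_Fp2 eta ` S in
     (\<lambda>i. 0) \<in> V \<and> (\<forall>u\<in>V. \<forall>v\<in>V. (\<lambda>i. u i + v i) \<in> V) \<and> (\<forall>c::'k. \<forall>v\<in>V. (\<lambda>i. c * v i) \<in> V))"

text \<open>R(eta) = F_p(eta)[X]/(X^n+1), elements represented by their canonical
  representatives: polynomials of degree < n (n > 0).\<close>
definition negacyc_modulus :: "nat \<Rightarrow> 'k::field poly" where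
  "negacyc_modulus n = monom 1 n + 1"

definition R_carrier :: "nat \<Rightarrow> 'k::field poly set" where
  "R_carrier n = {f. degree f < n}"

definition vec_poly :: "nat \<Rightarrow> (nat \<Rightarrow> 'k::field) \<Rightarrow> 'k poly" where
  "vec_poly n v = (\<Sum>i<n. monom (v i) i)"

definition R_ideal :: "nat \<Rightarrow> 'k::field poly set \<Rightarrow> bool" where
  "R_ideal n I \<longleftrightarrow> I \<subseteq> R_carrier n \<and> 0 \<in> I \<and>
     (\<forall>f\<in>I. \<forall>g\<in>I. f + g \<in> I) \<and> (\<forall>f\<in>I. - f \<in> I) \<and>
     (\<forall>f\<in>I. \<forall>g\<in>R_carrier n. (g * f) mod negacyc_modulus n \<in> I)"

definition image_R :: "nat \<Rightarrow> 'k::field \<Rightarrow> ((nat \<Rightarrow> 'k) \<times> (nat \<Rightarrow> 'k)) set \<Rightarrow> 'k poly set" where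
  "image_R n eta S = (\<lambda>x. vec_poly n (to_Fp2 eta x)) ` S"

end

theory Submission
  imports Defs "HOL-Number_Theory.Residues"
begin

text \<open>Identify F_p^n x F_p^n with F_{p^2}^n via (a,b) |-> a + eta b and then with R(eta).
  F_p-subspaces become additive subgroups, and simultaneous negacyclicity becomes
  closure under multiplication by X modulo X^n + 1. Such a subgroup is an ideal exactly
  when it is also closed under multiplication by constants of F_{p^2}, which is linearity.
  For the dual, F_{p^2} = F_p + eta F_p, so it suffices that S^perp is negacyclic (the
  negacyclic shift preserves the symplectic form and permutes the finite set S) and closed
  under multiplication by eta. In coordinates, multiplication by eta is the companion matrix
  of the minimal polynomial X^2 + c1 X + c0 of eta, whose symplectic adjoint is
  -(multiplication by eta) - c1; since S is stable under it, so is S^perp.\<close>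

section \<open>The prime subfield\<close>

lemma Fp_add: "x \<in> Fp \<Longrightarrow> y \<in> Fp \<Longrightarrow> x + y \<in> (Fp :: 'k::field set)"
  unfolding Fp_def by (auto simp flip: of_nat_add)

lemma Fp_mult: "x \<in> Fp \<Longrightarrow> y \<in> Fp \<Longrightarrow> x * y \<in> (Fp :: 'k::field set)"
  unfolding Fp_def by (auto simp flip: of_nat_mult)

lemma Fp_zero: "0 \<in> (Fp :: 'k::field set)"
  unfolding Fp_def by (metis of_nat_0 rangeI)

lemma Fp_one: "1 \<in> (Fp :: 'k::field set)"
  unfolding Fp_def by (metis of_nat_1 rangeI)

lemma Fp_uminus:
  assumes "x \<in> (Fp :: 'k::{field,finite} set)"
  shows "- x \<in> Fp"
proof -
  obtain a where a: "x = of_nat a"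
    using assms unfolding Fp_def by auto
  have "0 < CHAR('k)"
    by (rule finite_imp_CHAR_pos) simp
  then have "(of_nat (CHAR('k) * a - a) :: 'k) + of_nat a = of_nat (CHAR('k) * a)"
    by (simp flip: of_nat_add)
  then have "(of_nat (CHAR('k) * a - a) :: 'k) = - x"
    using a by (simp add: eq_neg_iff_add_eq_0)
  then show ?thesis
    unfolding Fp_def by (metis rangeI)
qed

lemma Fp_diff: "x \<in> Fp \<Longrightarrow> y \<in> Fp \<Longrightarrow> x - y \<in> (Fp :: 'k::{field,finite} set)"
  using Fp_add[of x "- y"] Fp_uminus[of y] by simp

lemma Fp_inverse:
  assumes "x \<in> (Fp :: 'k::{field,finite} set)"
  shows "inverse x \<in> Fp"
proof (cases "x = 0")
  case True
  then show ?thesis by (simp add: Fp_zero)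
next
  case False
  have "(\<lambda>y. x * y) ` Fp = Fp"
    by (rule endo_inj_surj) (auto simp: Fp_mult assms inj_on_def False)
  then obtain y where "y \<in> Fp" "x * y = 1"
    using Fp_one by (metis imageE)
  then show ?thesis
    using False by (metis inverse_unique)
qed

lemma card_Fp:
  assumes "prime p" and "CARD('k::{field,finite}) = p ^ 2"
  shows "card (Fp :: 'k set) = p"
proof -
  have "0 < CHAR('k)"
    by (rule finite_imp_CHAR_pos) simp
  then have "prime CHAR('k)"
    using prime_CHAR_semidom by blast
  moreover have "CHAR('k) dvd p ^ 2"
    using CHAR_dvd_CARD[where 'a = 'k] assms(2) by simp
  ultimately have char: "CHAR('k) = p"
    using assms(1) prime_dvd_power primes_dvd_imp_eq by blast
  have "Fp = (of_nat ` {..<p} :: 'k set)"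
  proof
    show "Fp \<subseteq> (of_nat ` {..<p} :: 'k set)"
    proof
      fix x :: 'k
      assume "x \<in> Fp"
      then obtain a where a: "x = of_nat a"
        unfolding Fp_def by auto
      have "x = of_nat (a mod p)"
        unfolding a of_nat_eq_iff_cong_CHAR char by (simp add: cong_def)
      moreover have "a mod p < p"
        using assms(1) prime_gt_0_nat by simp
      ultimately show "x \<in> of_nat ` {..<p}"
        by blast
    qed
  qed (auto simp: Fp_def)
  moreover have "inj_on (of_nat :: nat \<Rightarrow> 'k) {..<p}"
    unfolding inj_on_def of_nat_eq_iff_cong_CHAR char by (auto simp: cong_def)
  ultimately show ?thesis
    by (metis card_image card_lessThan)
qed

section \<open>F_{p^2} = F_p + eta F_p\<close>

lemma root_of_irred_quadratic_notin_Fp: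
  "root_of_irred_quadratic eta \<Longrightarrow> eta \<notin> Fp"
  unfolding root_of_irred_quadratic_def by blast

lemma Fp_eta_coords_unique:
  assumes "root_of_irred_quadratic (eta :: 'k::{field,finite})"
    and "a \<in> Fp" "b \<in> Fp" "a' \<in> Fp" "b' \<in> Fp"
    and "a + eta * b = a' + eta * b'"
  shows "a = a' \<and> b = b'"
proof (rule ccontr)
  assume "\<not> (a = a' \<and> b = b')"
  with assms(6) have "b \<noteq> b'"
    by auto
  moreover have "eta * (b - b') = a' - a"
    using assms(6) by (simp add: algebra_simps)
  ultimately have "eta = (a' - a) * inverse (b - b')"
    by (simp add: field_simps)
  then have "eta \<in> Fp"
    using assms(2-5) by (simp add: Fp_mult Fp_diff Fp_inverse)
  then show False
    using root_of_irred_quadratic_notin_Fp[OF assms(1)] by blast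
qed

lemma Fp_eta_coords_exist:
  assumes "prime p" and "CARD('k::{field,finite}) = p ^ 2"
    and "root_of_irred_quadratic (eta :: 'k)"
  shows "\<exists>a\<in>Fp. \<exists>b\<in>Fp. z = a + eta * b"
proof -
  let ?F = "\<lambda>(a, b). a + eta * b"
  have "inj_on ?F (Fp \<times> Fp)"
    unfolding inj_on_def using Fp_eta_coords_unique[OF assms(3)] by auto
  then have "card (?F ` (Fp \<times> Fp)) = p * p"
    using card_image card_Fp[OF assms(1,2)] by (metis card_cartesian_product)
  then have "?F ` (Fp \<times> Fp) = UNIV"
    by (intro card_eq_UNIV_imp_eq_UNIV) (auto simp: assms(2) power2_eq_square)
  then have "z \<in> ?F ` (Fp \<times> Fp)"
    by simp
  then show ?thesis
    by auto
qed

section \<open>Vectors as polynomials\<close>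

lemma coeff_vec_poly: "Polynomial.coeff (vec_poly n v) i = (if i < n then v i else 0)"
  unfolding vec_poly_def by (simp add: coeff_sum coeff_monom)

lemma inj_on_vec_poly: "inj_on (vec_poly n) (vecs n UNIV)"
proof (rule inj_onI, rule ext)
  fix u v i
  assume "u \<in> vecs n UNIV" "v \<in> vecs n UNIV" "vec_poly n u = vec_poly n v"
  then show "u i = v i"
    using arg_cong[of "vec_poly n u" "vec_poly n v" "\<lambda>f. Polynomial.coeff f i"]
    unfolding vecs_def coeff_vec_poly by (cases "i < n") auto
qed

lemma degree_vec_poly:
  assumes "n > 0"
  shows "degree (vec_poly n v) < n"
proof -
  have "degree (vec_poly n v) \<le> n - 1"
    by (rule degree_le) (auto simp: coeff_vec_poly)
  then show ?thesis
    using assms by linarith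
qed

lemma vec_poly_add: "vec_poly n (\<lambda>i. u i + v i) = vec_poly n u + vec_poly n v"
  by (rule poly_eqI) (simp add: coeff_vec_poly)

lemma vec_poly_smult: "vec_poly n (\<lambda>i. c * v i) = Polynomial.smult c (vec_poly n v)"
  by (rule poly_eqI) (simp add: coeff_vec_poly)

lemma vec_poly_zero: "vec_poly n (\<lambda>i. 0) = 0"
  by (rule poly_eqI) (simp add: coeff_vec_poly)

lemma degree_negacyc_modulus: "n > 0 \<Longrightarrow> degree (negacyc_modulus n :: 'k::field poly) = n"
  unfolding negacyc_modulus_def by (subst degree_add_eq_left) (auto simp: degree_monom_eq)

lemma coeff_negacyc_modulus:
  "n > 0 \<Longrightarrow> Polynomial.coeff (negacyc_modulus n :: 'k::field poly) i = (if i = 0 \<or> i = n then 1 else 0)"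
  unfolding negacyc_modulus_def by (auto simp: coeff_monom)

lemma mod_negacyc_modulus_eq: "n > 0 \<Longrightarrow> degree f < n \<Longrightarrow> f mod negacyc_modulus n = f"
  by (simp add: mod_poly_less degree_negacyc_modulus)

lemma vec_poly_negashift:
  assumes "n > 0" and "v \<in> vecs n UNIV"
  shows "([:0, 1:] * vec_poly n v) mod negacyc_modulus n = vec_poly n (negashift n v)"
proof -
  have "[:0, 1:] * vec_poly n v = Polynomial.smult (v (n - 1)) (negacyc_modulus n) + vec_poly n (negashift n v)"
  proof (rule poly_eqI)
    fix i
    show "Polynomial.coeff ([:0, 1:] * vec_poly n v) i
      = Polynomial.coeff (Polynomial.smult (v (n - 1)) (negacyc_modulus n) + vec_poly n (negashift n v)) i"
      using assms unfolding vecs_def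
      by (cases i) (auto simp: coeff_vec_poly coeff_negacyc_modulus negashift_def coeff_pCons
          intro!: arg_cong[where f = v])
  qed
  then show ?thesis
    by (simp add: mod_negacyc_modulus_eq degree_vec_poly assms(1) poly_mod_add_left mod_smult_left)
qed

section \<open>Ideals of R(eta) as sets of vectors\<close>

definition smult_closed :: "(nat \<Rightarrow> 'k::times) set \<Rightarrow> bool" where
  "smult_closed V \<longleftrightarrow> (\<forall>c. \<forall>v\<in>V. (\<lambda>i. c * v i) \<in> V)"

lemma R_ideal_vec_poly_image:
  fixes V :: "(nat \<Rightarrow> 'k::field) set"
  assumes n: "n > 0" and V: "V \<subseteq> vecs n UNIV" "(\<lambda>i. 0) \<in> V"
    and add: "\<And>u v. u \<in> V \<Longrightarrow> v \<in> V \<Longrightarrow> (\<lambda>i. u i + v i) \<in> V"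
    and shift: "\<And>v. v \<in> V \<Longrightarrow> negashift n v \<in> V"
    and smult: "smult_closed V"
  shows "R_ideal n (vec_poly n ` V)"
proof -
  let ?I = "vec_poly n ` V" and ?m = "negacyc_modulus n :: 'k poly"
  have I_add: "f + g \<in> ?I" if "f \<in> ?I" "g \<in> ?I" for f g
    using that add by (auto simp flip: vec_poly_add)
  have I_smult: "Polynomial.smult c f \<in> ?I" if "f \<in> ?I" for f c
    using that smult unfolding smult_closed_def by (auto simp flip: vec_poly_smult)
  have I_degree: "degree f < n" if "f \<in> ?I" for f
    using that degree_vec_poly n by auto
  have I_zero: "0 \<in> ?I"
    using V(2) vec_poly_zero by (metis imageI)
  have I_X: "([:0, 1:] * f) mod ?m \<in> ?I" if f: "f \<in> ?I" for f
  proof -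
    obtain v where "v \<in> V" "f = vec_poly n v"
      using f by blast
    then show ?thesis
      using vec_poly_negashift[OF n] V(1) shift by (metis imageI subsetD)
  qed
  have I_mult: "(g * f) mod ?m \<in> ?I" if f: "f \<in> ?I" for f g
  proof (induction g)
    case 0
    then show ?case using I_zero by simp
  next
    case (pCons a g)
    have "(pCons a g * f) mod ?m = Polynomial.smult a f mod ?m + ([:0, 1:] * (g * f)) mod ?m"
      by (simp add: poly_mod_add_left)
    also have "Polynomial.smult a f mod ?m = Polynomial.smult a f"
      using I_degree[OF f] by (simp add: mod_negacyc_modulus_eq[OF n])
    also have "([:0, 1:] * (g * f)) mod ?m = ([:0, 1:] * ((g * f) mod ?m)) mod ?m"
      by (simp only: mod_mult_right_eq)
    finally show ?case
      using I_add I_smult I_X pCons.IH f by simp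
  qed
  have I_uminus: "- f \<in> ?I" if "f \<in> ?I" for f
    using I_smult[OF that, of "- 1"] by simp
  show ?thesis
    unfolding R_ideal_def R_carrier_def
    using I_degree I_zero I_add I_uminus I_mult by blast
qed

lemma smult_closed_if_R_ideal_vec_poly_image:
  fixes V :: "(nat \<Rightarrow> 'k::field) set"
  assumes "n > 0" and "V \<subseteq> vecs n UNIV" and "R_ideal n (vec_poly n ` V)"
  shows "smult_closed V"
  unfolding smult_closed_def
proof (intro allI ballI)
  fix c :: 'k and v
  assume v: "v \<in> V"
  have "[:c:] \<in> R_carrier n"
    unfolding R_carrier_def using assms(1) by simp
  then have "([:c:] * vec_poly n v) mod negacyc_modulus n \<in> vec_poly n ` V"
    using assms(3) v unfolding R_ideal_def by blast
  moreover have "([:c:] * vec_poly n v) mod negacyc_modulus n = vec_poly n (\<lambda>i. c * v i)"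
    by (simp add: vec_poly_smult mod_negacyc_modulus_eq degree_vec_poly assms(1))
  ultimately obtain w where w: "w \<in> V" "vec_poly n w = vec_poly n (\<lambda>i. c * v i)"
    by (metis imageE)
  have "(\<lambda>i. c * v i) \<in> vecs n UNIV"
    using assms(2) v unfolding vecs_def by auto
  then have "w = (\<lambda>i. c * v i)"
    using inj_on_vec_poly w assms(2) by (metis inj_onD subsetD)
  then show "(\<lambda>i. c * v i) \<in> V"
    using w(1) by simp
qed

definition pair_add :: "(nat \<Rightarrow> 'k::plus) \<times> (nat \<Rightarrow> 'k) \<Rightarrow> (nat \<Rightarrow> 'k) \<times> (nat \<Rightarrow> 'k) \<Rightarrow> (nat \<Rightarrow> 'k) \<times> (nat \<Rightarrow> 'k)" where
  "pair_add x y = (\<lambda>i. fst x i + fst y i, \<lambda>i. snd x i + snd y i)"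

definition pair_smult :: "'k::times \<Rightarrow> (nat \<Rightarrow> 'k) \<times> (nat \<Rightarrow> 'k) \<Rightarrow> (nat \<Rightarrow> 'k) \<times> (nat \<Rightarrow> 'k)" where
  "pair_smult c x = (\<lambda>i. c * fst x i, \<lambda>i. c * snd x i)"

definition pair_negashift :: "nat \<Rightarrow> (nat \<Rightarrow> 'k::ring_1) \<times> (nat \<Rightarrow> 'k) \<Rightarrow> (nat \<Rightarrow> 'k) \<times> (nat \<Rightarrow> 'k)" where
  "pair_negashift n x = (negashift n (fst x), negashift n (snd x))"

definition companion_mult :: "'k::ring \<Rightarrow> 'k \<Rightarrow> (nat \<Rightarrow> 'k) \<times> (nat \<Rightarrow> 'k) \<Rightarrow> (nat \<Rightarrow> 'k) \<times> (nat \<Rightarrow> 'k)" where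
  "companion_mult c0 c1 x = (\<lambda>i. - c0 * snd x i, \<lambda>i. fst x i - c1 * snd x i)"

lemma Fp_subspace_iff:
  "Fp_subspace n S \<longleftrightarrow> S \<subseteq> vecs n Fp \<times> vecs n Fp \<and> (\<lambda>i. 0, \<lambda>i. 0) \<in> S \<and>
     (\<forall>x\<in>S. \<forall>y\<in>S. pair_add x y \<in> S) \<and> (\<forall>c\<in>Fp. \<forall>x\<in>S. pair_smult c x \<in> S)"
  unfolding Fp_subspace_def pair_add_def pair_smult_def ..

lemma simul_negacyclic_iff: "simul_negacyclic n S \<longleftrightarrow> (\<forall>x\<in>S. pair_negashift n x \<in> S)"
  unfolding simul_negacyclic_def pair_negashift_def by auto

lemma finite_vecs: "finite (vecs n (A :: 'k::{field,finite} set))"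
proof (rule finite_subset)
  show "vecs n A \<subseteq> (\<lambda>xs i. if i < n then xs ! i else 0) ` {xs. set xs \<subseteq> UNIV \<and> length xs = n}"
  proof
    fix v
    assume "v \<in> vecs n A"
    then have "v = (\<lambda>i. if i < n then map v [0..<n] ! i else 0)"
      unfolding vecs_def by auto
    then show "v \<in> (\<lambda>xs i. if i < n then xs ! i else 0) ` {xs. set xs \<subseteq> UNIV \<and> length xs = n}"
      by force
  qed
qed (intro finite_imageI finite_lists_length_eq finite)

lemma pair_add_in_vecs:
  "x \<in> vecs n Fp \<times> vecs n Fp \<Longrightarrow> y \<in> vecs n Fp \<times> vecs n Fp \<Longrightarrow>
   pair_add x y \<in> vecs n Fp \<times> vecs n (Fp :: 'k::field set)"
  unfolding vecs_def pair_add_def by (auto simp: Fp_add)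

lemma pair_smult_in_vecs:
  "c \<in> Fp \<Longrightarrow> x \<in> vecs n Fp \<times> vecs n Fp \<Longrightarrow>
   pair_smult c x \<in> vecs n Fp \<times> vecs n (Fp :: 'k::field set)"
  unfolding vecs_def pair_smult_def by (auto simp: Fp_mult)

lemma pair_negashift_in_vecs:
  "x \<in> vecs n Fp \<times> vecs n Fp \<Longrightarrow> pair_negashift n x \<in> vecs n Fp \<times> vecs n (Fp :: 'k::{field,finite} set)"
  unfolding vecs_def pair_negashift_def negashift_def by (auto simp: Fp_uminus Fp_zero)

lemma inj_on_negashift: "n > 0 \<Longrightarrow> inj_on (negashift n) (vecs n (A :: 'k::field set))"
proof (rule inj_onI, rule ext)
  fix u v i
  assume "n > 0" "u \<in> vecs n A" "v \<in> vecs n A" "negashift n u = negashift n v"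
  then show "u i = v i"
    using fun_cong[of "negashift n u" "negashift n v" "Suc i"]
      fun_cong[of "negashift n u" "negashift n v" 0]
    unfolding vecs_def negashift_def
    by (cases "Suc i < n"; cases "i = n - 1") auto
qed

lemma sum_negashift_mult:
  assumes "n > 0"
  shows "(\<Sum>i<n. negashift n u i * negashift n v i) = (\<Sum>i<n. u i * (v i :: 'k::comm_ring_1))"
proof -
  obtain m where m: "n = Suc m"
    using assms by (cases n) auto
  have "(\<Sum>i<n. negashift n u i * negashift n v i)
      = negashift n u 0 * negashift n v 0 + (\<Sum>i<m. negashift n u (Suc i) * negashift n v (Suc i))"
    unfolding m by (rule sum.lessThan_Suc_shift)
  also have "\<dots> = u m * v m + (\<Sum>i<m. u i * v i)"
    by (simp add: negashift_def m)
  finally show ?thesis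
    unfolding m by (simp add: add.commute)
qed

lemma symp_pair_negashift:
  "n > 0 \<Longrightarrow> symp n (pair_negashift n x) (pair_negashift n y) = symp n x y"
  unfolding symp_def pair_negashift_def by (simp add: sum_negashift_mult)

lemma symp_pair_add: "symp n s (pair_add x y) = symp n s x + symp n s y"
  unfolding symp_def pair_add_def by (simp add: sum.distrib algebra_simps)

lemma symp_pair_smult: "symp n s (pair_smult c y) = c * symp n s y"
  unfolding symp_def pair_smult_def by (simp add: sum_distrib_left algebra_simps)

lemma symp_zero: "symp n s (\<lambda>i. 0, \<lambda>i. 0) = 0"
  unfolding symp_def by simp

lemma symp_companion_mult:
  "symp n s (companion_mult c0 c1 y) = - symp n (companion_mult c0 c1 s) y - c1 * symp n s y"
  unfolding symp_def companion_mult_def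
  by (simp add: sum_subtractf sum_negf sum_distrib_left algebra_simps)

lemma to_Fp2_in_vecs: "x \<in> vecs n Fp \<times> vecs n Fp \<Longrightarrow> to_Fp2 eta x \<in> vecs n (UNIV :: 'k::field set)"
  unfolding vecs_def to_Fp2_def by auto

lemma inj_on_to_Fp2:
  assumes "root_of_irred_quadratic (eta :: 'k::{field,finite})"
  shows "inj_on (to_Fp2 eta) (vecs n Fp \<times> vecs n Fp)"
proof (rule inj_onI)
  fix x y
  assume x: "x \<in> vecs n Fp \<times> vecs n Fp" and y: "y \<in> vecs n Fp \<times> vecs n Fp"
    and xy: "to_Fp2 eta x = to_Fp2 eta y"
  have "fst x i = fst y i \<and> snd x i = snd y i" for i
    using Fp_eta_coords_unique[OF assms, of "fst x i" "snd x i" "fst y i" "snd y i"]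
      x y fun_cong[OF xy, of i]
    unfolding vecs_def to_Fp2_def by auto
  then show "x = y"
    by (simp add: prod_eq_iff fun_eq_iff)
qed

lemma to_Fp2_zero: "to_Fp2 eta (\<lambda>i. 0, \<lambda>i. 0) = (\<lambda>i. 0)"
  unfolding to_Fp2_def by simp

lemma to_Fp2_pair_add: "to_Fp2 eta (pair_add x y) = (\<lambda>i. to_Fp2 eta x i + to_Fp2 eta y i)"
  unfolding to_Fp2_def pair_add_def by (auto simp: algebra_simps)

lemma to_Fp2_pair_smult: "to_Fp2 eta (pair_smult c x) = (\<lambda>i. c * to_Fp2 eta x i)"
  unfolding to_Fp2_def pair_smult_def by (auto simp: algebra_simps)

lemma to_Fp2_pair_negashift: "to_Fp2 eta (pair_negashift n x) = negashift n (to_Fp2 eta x)"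
  unfolding to_Fp2_def pair_negashift_def negashift_def by (auto simp: algebra_simps)

lemma to_Fp2_companion_mult:
  assumes "eta ^ 2 + c1 * eta + c0 = (0 :: 'k::field)"
  shows "to_Fp2 eta (companion_mult c0 c1 x) = (\<lambda>i. eta * to_Fp2 eta x i)"
proof
  fix i
  have "eta * to_Fp2 eta x i - to_Fp2 eta (companion_mult c0 c1 x) i
      = (eta ^ 2 + c1 * eta + c0) * snd x i"
    unfolding to_Fp2_def companion_mult_def by (simp add: algebra_simps power2_eq_square)
  then show "to_Fp2 eta (companion_mult c0 c1 x) i = eta * to_Fp2 eta x i"
    using assms by simp
qed

lemma companion_mult_in_vecs:
  "c0 \<in> Fp \<Longrightarrow> c1 \<in> Fp \<Longrightarrow> x \<in> vecs n Fp \<times> vecs n Fp \<Longrightarrow>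
   companion_mult c0 c1 x \<in> vecs n Fp \<times> vecs n (Fp :: 'k::{field,finite} set)"
  unfolding vecs_def companion_mult_def by (auto simp: Fp_mult Fp_diff Fp_uminus)

lemma zero_in_to_Fp2_image:
  assumes "Fp_subspace n S"
  shows "(\<lambda>i. 0) \<in> to_Fp2 eta ` S"
proof -
  have "(\<lambda>i. 0, \<lambda>i. 0) \<in> S"
    using assms unfolding Fp_subspace_def by blast
  then show ?thesis
    by (rule rev_image_eqI) (simp add: to_Fp2_zero)
qed

lemma add_in_to_Fp2_image:
  assumes "Fp_subspace n S" and "u \<in> to_Fp2 eta ` S" and "v \<in> to_Fp2 eta ` S"
  shows "(\<lambda>i. u i + v i) \<in> to_Fp2 eta ` S"
proof -
  obtain x y where "x \<in> S" "y \<in> S" and uv: "u = to_Fp2 eta x" "v = to_Fp2 eta y"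
    using assms(2,3) by blast
  then have "pair_add x y \<in> S"
    using assms(1) unfolding Fp_subspace_iff by blast
  then show ?thesis
    by (rule rev_image_eqI) (simp add: to_Fp2_pair_add uv)
qed

lemma negashift_in_to_Fp2_image:
  assumes "simul_negacyclic n S" and "v \<in> to_Fp2 eta ` S"
  shows "negashift n v \<in> to_Fp2 eta ` S"
proof -
  obtain x where "x \<in> S" and v: "v = to_Fp2 eta x"
    using assms(2) by blast
  then have "pair_negashift n x \<in> S"
    using assms(1) unfolding simul_negacyclic_iff by blast
  then show ?thesis
    by (rule rev_image_eqI) (simp add: to_Fp2_pair_negashift v)
qed

lemma R_ideal_image_R_iff:
  assumes n: "n > 0" and S: "Fp_subspace n S" "simul_negacyclic n S"
  shows "R_ideal n (image_R n eta S) \<longleftrightarrow> smult_closed (to_Fp2 eta ` S)"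
proof -
  have sub: "to_Fp2 eta ` S \<subseteq> vecs n UNIV"
    using S(1) to_Fp2_in_vecs unfolding Fp_subspace_def by blast
  have "R_ideal n (vec_poly n ` to_Fp2 eta ` S) \<longleftrightarrow> smult_closed (to_Fp2 eta ` S)"
  proof
    assume "R_ideal n (vec_poly n ` to_Fp2 eta ` S)"
    then show "smult_closed (to_Fp2 eta ` S)"
      by (rule smult_closed_if_R_ideal_vec_poly_image[OF n sub])
  next
    assume "smult_closed (to_Fp2 eta ` S)"
    then show "R_ideal n (vec_poly n ` to_Fp2 eta ` S)"
      using R_ideal_vec_poly_image[OF n sub zero_in_to_Fp2_image[OF S(1)]]
        add_in_to_Fp2_image[OF S(1)] negashift_in_to_Fp2_image[OF S(2)] by blast
  qed
  then show ?thesis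
    by (simp add: image_R_def image_image)
qed

lemma code_linear_iff_smult_closed:
  assumes "Fp_subspace n S"
  shows "code_linear n eta S \<longleftrightarrow> smult_closed (to_Fp2 eta ` S)"
proof -
  have "\<forall>u\<in>to_Fp2 eta ` S. \<forall>v\<in>to_Fp2 eta ` S. (\<lambda>i. u i + v i) \<in> to_Fp2 eta ` S"
    using add_in_to_Fp2_image[OF assms] by blast
  then show ?thesis
    unfolding code_linear_def smult_closed_def Let_def
    using zero_in_to_Fp2_image[OF assms] by simp
qed

lemma smult_closed_if_eta_mult_closed:
  fixes S :: "((nat \<Rightarrow> 'k::{field,finite}) \<times> (nat \<Rightarrow> 'k)) set"
  assumes "prime p" and "CARD('k) = p ^ 2" and "root_of_irred_quadratic eta"
    and S: "Fp_subspace n S" and eta_mult: "\<forall>v\<in>to_Fp2 eta ` S. (\<lambda>i. eta * v i) \<in> to_Fp2 eta ` S"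
  shows "smult_closed (to_Fp2 eta ` S)"
  unfolding smult_closed_def
proof (intro allI ballI)
  fix c :: 'k and v
  assume v: "v \<in> to_Fp2 eta ` S"
  then obtain y where y: "y \<in> S" "v = to_Fp2 eta y"
    by blast
  have "(\<lambda>i. eta * v i) \<in> to_Fp2 eta ` S"
    using eta_mult v by blast
  then obtain y' where y': "(\<lambda>i. eta * v i) = to_Fp2 eta y'" "y' \<in> S"
    by (rule imageE)
  obtain a b where ab: "a \<in> Fp" "b \<in> Fp" "c = a + eta * b"
    using Fp_eta_coords_exist[OF assms(1-3)] by blast
  have "pair_smult a y \<in> S" "pair_smult b y' \<in> S"
    using S y(1) y'(2) ab(1,2) unfolding Fp_subspace_iff by blast+
  then have "pair_add (pair_smult a y) (pair_smult b y') \<in> S"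
    using S unfolding Fp_subspace_iff by blast
  moreover have "(\<lambda>i. c * v i) = to_Fp2 eta (pair_add (pair_smult a y) (pair_smult b y'))"
    by (simp add: to_Fp2_pair_add to_Fp2_pair_smult y'(1)[symmetric] y(2) ab(3) algebra_simps)
  ultimately show "(\<lambda>i. c * v i) \<in> to_Fp2 eta ` S"
    by (rule rev_image_eqI)
qed

section \<open>The symplectic dual\<close>

lemma mem_symp_dual_iff:
  "y \<in> symp_dual n S \<longleftrightarrow> y \<in> vecs n Fp \<times> vecs n Fp \<and> (\<forall>s\<in>S. symp n s y = 0)"
  unfolding symp_dual_def by blast

lemma Fp_subspace_symp_dual:
  fixes S :: "((nat \<Rightarrow> 'k::field) \<times> (nat \<Rightarrow> 'k)) set"
  shows "Fp_subspace n (symp_dual n S)"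
  unfolding Fp_subspace_iff
proof (intro conjI ballI)
  show "symp_dual n S \<subseteq> vecs n Fp \<times> vecs n Fp"
    unfolding symp_dual_def by blast
  show "(\<lambda>i. 0, \<lambda>i. 0) \<in> symp_dual n S"
    unfolding mem_symp_dual_iff vecs_def by (simp add: symp_zero Fp_zero)
next
  fix x y
  assume "x \<in> symp_dual n S" "y \<in> symp_dual n S"
  then show "pair_add x y \<in> symp_dual n S"
    unfolding mem_symp_dual_iff by (simp add: symp_pair_add pair_add_in_vecs)
next
  fix c :: 'k and x
  assume "c \<in> Fp" "x \<in> symp_dual n S"
  then show "pair_smult c x \<in> symp_dual n S"
    unfolding mem_symp_dual_iff by (simp add: symp_pair_smult pair_smult_in_vecs)
qed

lemma inj_on_pair_negashift:
  assumes n: "n > 0"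
  shows "inj_on (pair_negashift n) (vecs n A \<times> vecs n (A :: 'k::field set))"
proof (rule inj_onI)
  fix x y
  assume x: "x \<in> vecs n A \<times> vecs n A" and y: "y \<in> vecs n A \<times> vecs n A"
    and xy: "pair_negashift n x = pair_negashift n y"
  have "fst x = fst y"
    by (rule inj_onD[OF inj_on_negashift[OF n]]) (use x y xy in \<open>auto simp: pair_negashift_def\<close>)
  moreover have "snd x = snd y"
    by (rule inj_onD[OF inj_on_negashift[OF n]]) (use x y xy in \<open>auto simp: pair_negashift_def\<close>)
  ultimately show "x = y"
    by (rule prod_eqI)
qed

lemma pair_negashift_image:
  fixes S :: "((nat \<Rightarrow> 'k::{field,finite}) \<times> (nat \<Rightarrow> 'k)) set"
  assumes n: "n > 0" and "Fp_subspace n S" and "simul_negacyclic n S"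
  shows "pair_negashift n ` S = S"
proof (rule endo_inj_surj)
  have SP: "S \<subseteq> vecs n Fp \<times> vecs n Fp"
    using assms(2) unfolding Fp_subspace_def by blast
  then show "finite S"
    using finite_vecs[of n Fp] by (blast intro: finite_subset)
  show "pair_negashift n ` S \<subseteq> S"
    using assms(3) unfolding simul_negacyclic_iff by blast
  show "inj_on (pair_negashift n) S"
    by (rule inj_on_subset[OF inj_on_pair_negashift[OF n] SP])
qed

lemma simul_negacyclic_symp_dual:
  fixes S :: "((nat \<Rightarrow> 'k::{field,finite}) \<times> (nat \<Rightarrow> 'k)) set"
  assumes n: "n > 0" and "Fp_subspace n S" and "simul_negacyclic n S"
  shows "simul_negacyclic n (symp_dual n S)"
  unfolding simul_negacyclic_iff
proof
  fix y
  assume y: "y \<in> symp_dual n S"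
  have "symp n s (pair_negashift n y) = 0" if s: "s \<in> S" for s
  proof -
    have "s \<in> pair_negashift n ` S"
      using s pair_negashift_image[OF assms] by simp
    then obtain s' where "s = pair_negashift n s'" "s' \<in> S"
      by (rule imageE)
    then show ?thesis
      using y unfolding mem_symp_dual_iff by (simp add: symp_pair_negashift[OF n])
  qed
  then show "pair_negashift n y \<in> symp_dual n S"
    using y pair_negashift_in_vecs unfolding mem_symp_dual_iff by blast
qed

lemma symp_dual_eta_mult_closed:
  fixes S :: "((nat \<Rightarrow> 'k::{field,finite}) \<times> (nat \<Rightarrow> 'k)) set"
  assumes eta: "root_of_irred_quadratic eta" and "Fp_subspace n S" and "code_linear n eta S"
  shows "\<forall>v\<in>to_Fp2 eta ` symp_dual n S. (\<lambda>i. eta * v i) \<in> to_Fp2 eta ` symp_dual n S"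
proof -
  obtain c0 c1 where c: "c0 \<in> Fp" "c1 \<in> Fp" "eta ^ 2 + c1 * eta + c0 = 0"
    using eta unfolding root_of_irred_quadratic_def by blast
  have SP: "S \<subseteq> vecs n Fp \<times> vecs n Fp"
    using assms(2) unfolding Fp_subspace_def by blast
  have smult: "smult_closed (to_Fp2 eta ` S)"
    using assms(2,3) code_linear_iff_smult_closed by blast
  have S_companion: "companion_mult c0 c1 s \<in> S" if s: "s \<in> S" for s
  proof -
    have "(\<lambda>i. eta * to_Fp2 eta s i) \<in> to_Fp2 eta ` S"
      using smult s unfolding smult_closed_def by blast
    then obtain s' where s': "to_Fp2 eta (companion_mult c0 c1 s) = to_Fp2 eta s'" "s' \<in> S"
      unfolding to_Fp2_companion_mult[OF c(3)] by (rule imageE)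
    have "companion_mult c0 c1 s \<in> vecs n Fp \<times> vecs n Fp"
      using s SP companion_mult_in_vecs[OF c(1,2)] by blast
    then have "companion_mult c0 c1 s = s'"
      by (rule inj_onD[OF inj_on_to_Fp2[OF eta] s'(1)]) (use s'(2) SP in blast)
    with s'(2) show ?thesis
      by simp
  qed
  have D_companion: "companion_mult c0 c1 y \<in> symp_dual n S" if y: "y \<in> symp_dual n S" for y
  proof -
    have "symp n s (companion_mult c0 c1 y) = 0" if "s \<in> S" for s
      using y S_companion[OF that] that unfolding mem_symp_dual_iff by (simp add: symp_companion_mult)
    then show ?thesis
      using y companion_mult_in_vecs[OF c(1,2)] unfolding mem_symp_dual_iff by blast
  qed
  show ?thesis
  proof
    fix v
    assume "v \<in> to_Fp2 eta ` symp_dual n S"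
    then obtain y where "v = to_Fp2 eta y" "y \<in> symp_dual n S"
      by (rule imageE)
    then show "(\<lambda>i. eta * v i) \<in> to_Fp2 eta ` symp_dual n S"
      by (intro rev_image_eqI[OF D_companion]) (simp_all add: to_Fp2_companion_mult[OF c(3)])
  qed
qed

theorem mainTheorem6:
  fixes S :: "((nat \<Rightarrow> 'k::{field,finite}) \<times> (nat \<Rightarrow> 'k)) set"
    and p n :: nat and eta :: 'k
  assumes "prime p" and "odd p" and "CARD('k) = p ^ 2"
    and "n > 0" and "coprime n p"
    and "root_of_irred_quadratic eta"
    and "Fp_subspace n S" and "totally_isotropic n S" and "simul_negacyclic n S"
  shows "(code_linear n eta S \<longleftrightarrow> R_ideal n (image_R n eta S)) \<and>
         (code_linear n eta S \<longrightarrow> R_ideal n (image_R n eta (symp_dual n S)))"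
proof -
  have "code_linear n eta S \<longleftrightarrow> R_ideal n (image_R n eta S)"
    using code_linear_iff_smult_closed[OF assms(7)] R_ideal_image_R_iff[OF assms(4,7,9)] by simp
  moreover have "R_ideal n (image_R n eta (symp_dual n S))" if "code_linear n eta S"
  proof -
    have "smult_closed (to_Fp2 eta ` symp_dual n S)"
      using smult_closed_if_eta_mult_closed[OF assms(1,3,6) Fp_subspace_symp_dual]
        symp_dual_eta_mult_closed[OF assms(6,7) that] by blast
    then show ?thesis
      using R_ideal_image_R_iff[OF assms(4) Fp_subspace_symp_dual
          simul_negacyclic_symp_dual[OF assms(4,7,9)]] by blast
  qed
  ultimately show ?thesis
    by blast
qed

end
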